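(* Let $n\geq 2$ and let $\theta$ be a domestic duality of the building $\mathsf{A}_n(2)$ (the projective space $\mathsf{PG}(n,2)$). Then either $\theta$ is an exceptional domestic duality, or $n$ is odd and $\theta$ is a symplectic polarity.
   Context: Vertices of type $i$ of $\mathsf{PG}(n,2)$ are the $(i-1)$-dimensional projective subspaces. A duality is an automorphism with type map $i\mapsto n+1-i$. Simplices are opposite if every chamber containing either is opposite some chamber containing the other. $\theta$ is domestic if no chamber is mapped to an opposite chamber; it is exceptional domestic if it is domestic and for every type $i$ there is a simplex whose type contains $i$ mapped to an opposite simplex. A symplectic polarity is a duality $U\mapsto U^\perp$ for a nondegenerate alternating form on $\mathbb{F}_2^{n+1}$. *)

theory Defs
  imports Main "HOL-Library.Z2"
begin

text \<open>The vector space F_2^(n+1), realised as functions nat => bit supported on {0..n}.\<close>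

definition Vec :: "nat \<Rightarrow> (nat \<Rightarrow> bit) set" where
  "Vec n = {v. \<forall>i>n. v i = 0}"

definition vadd :: "(nat \<Rightarrow> bit) \<Rightarrow> (nat \<Rightarrow> bit) \<Rightarrow> (nat \<Rightarrow> bit)" where
  "vadd x y = (\<lambda>i. x i + y i)"

definition vzero :: "nat \<Rightarrow> bit" where
  "vzero = (\<lambda>i. 0)"

text \<open>Linear subspaces of F_2^(n+1) (over F_2, scalar closure is automatic).\<close>
definition subspace2 :: "nat \<Rightarrow> (nat \<Rightarrow> bit) set \<Rightarrow> bool" where
  "subspace2 n U \<longleftrightarrow> U \<subseteq> Vec n \<and> vzero \<in> U \<and> (\<forall>x\<in>U. \<forall>y\<in>U. vadd x y \<in> U)"

text \<open>Vector-space dimension: a subspace of dimension d has exactly 2^d elements.\<close>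
definition vdim :: "(nat \<Rightarrow> bit) set \<Rightarrow> nat" where
  "vdim U = (THE d. card U = 2 ^ d)"

text \<open>Vertices of PG(n,2): proper nontrivial subspaces; a vertex U has type vdim U
  (U is a projective subspace of projective dimension vdim U - 1), types 1..n.\<close>
definition Verts :: "nat \<Rightarrow> (nat \<Rightarrow> bit) set set" where
  "Verts n = {U. subspace2 n U \<and> 1 \<le> vdim U \<and> vdim U \<le> n}"

definition incident :: "(nat \<Rightarrow> bit) set \<Rightarrow> (nat \<Rightarrow> bit) set \<Rightarrow> bool" where
  "incident U W \<longleftrightarrow> U \<subseteq> W \<or> W \<subseteq> U"

definition simplex :: "nat \<Rightarrow> (nat \<Rightarrow> bit) set set \<Rightarrow> bool" where
  "simplex n S \<longleftrightarrow> S \<subseteq> Verts n \<and> (\<forall>U\<in>S. \<forall>W\<in>S. incident U W)"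

definition stype :: "(nat \<Rightarrow> bit) set set \<Rightarrow> nat set" where
  "stype S = vdim ` S"

text \<open>Chambers: maximal simplices (complete flags), i.e. simplices of type {1..n}.\<close>
definition chamber :: "nat \<Rightarrow> (nat \<Rightarrow> bit) set set \<Rightarrow> bool" where
  "chamber n C \<longleftrightarrow> simplex n C \<and> stype C = {1..n}"

definition opp_chamber :: "nat \<Rightarrow> (nat \<Rightarrow> bit) set set \<Rightarrow> (nat \<Rightarrow> bit) set set \<Rightarrow> bool" where
  "opp_chamber n C D \<longleftrightarrow> chamber n C \<and> chamber n D \<and>
     (\<forall>U\<in>C. \<forall>W\<in>D. vdim U + vdim W = n + 1 \<longrightarrow> U \<inter> W = {vzero})"

definition opp_simplex :: "nat \<Rightarrow> (nat \<Rightarrow> bit) set set \<Rightarrow> (nat \<Rightarrow> bit) set set \<Rightarrow> bool" where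
  "opp_simplex n S T \<longleftrightarrow> simplex n S \<and> simplex n T \<and>
     (\<forall>C. chamber n C \<and> S \<subseteq> C \<longrightarrow> (\<exists>D. chamber n D \<and> T \<subseteq> D \<and> opp_chamber n C D)) \<and>
     (\<forall>D. chamber n D \<and> T \<subseteq> D \<longrightarrow> (\<exists>C. chamber n C \<and> S \<subseteq> C \<and> opp_chamber n C D))"

definition duality :: "nat \<Rightarrow> ((nat \<Rightarrow> bit) set \<Rightarrow> (nat \<Rightarrow> bit) set) \<Rightarrow> bool" where
  "duality n \<theta> \<longleftrightarrow> bij_betw \<theta> (Verts n) (Verts n) \<and>
     (\<forall>U\<in>Verts n. \<forall>W\<in>Verts n. incident U W \<longleftrightarrow> incident (\<theta> U) (\<theta> W)) \<and>
     (\<forall>U\<in>Verts n. vdim (\<theta> U) = n + 1 - vdim U)"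

definition domestic :: "nat \<Rightarrow> ((nat \<Rightarrow> bit) set \<Rightarrow> (nat \<Rightarrow> bit) set) \<Rightarrow> bool" where
  "domestic n \<theta> \<longleftrightarrow> \<not> (\<exists>C. chamber n C \<and> opp_chamber n C (\<theta> ` C))"

definition exceptional_domestic :: "nat \<Rightarrow> ((nat \<Rightarrow> bit) set \<Rightarrow> (nat \<Rightarrow> bit) set) \<Rightarrow> bool" where
  "exceptional_domestic n \<theta> \<longleftrightarrow> domestic n \<theta> \<and>
     (\<forall>i\<in>{1..n}. \<exists>S. simplex n S \<and> i \<in> stype S \<and> opp_simplex n S (\<theta> ` S))"

definition alt_form :: "nat \<Rightarrow> ((nat \<Rightarrow> bit) \<Rightarrow> (nat \<Rightarrow> bit) \<Rightarrow> bit) \<Rightarrow> bool" where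
  "alt_form n f \<longleftrightarrow>
     (\<forall>x\<in>Vec n. \<forall>y\<in>Vec n. \<forall>z\<in>Vec n. f (vadd x y) z = f x z + f y z \<and> f z (vadd x y) = f z x + f z y) \<and>
     (\<forall>x\<in>Vec n. f x x = 0) \<and>
     (\<forall>x\<in>Vec n. (\<forall>y\<in>Vec n. f x y = 0) \<longrightarrow> x = vzero)"

definition perp :: "nat \<Rightarrow> ((nat \<Rightarrow> bit) \<Rightarrow> (nat \<Rightarrow> bit) \<Rightarrow> bit) \<Rightarrow> (nat \<Rightarrow> bit) set \<Rightarrow> (nat \<Rightarrow> bit) set" where
  "perp n f U = {x\<in>Vec n. \<forall>u\<in>U. f u x = 0}"

definition symplectic_polarity :: "nat \<Rightarrow> ((nat \<Rightarrow> bit) set \<Rightarrow> (nat \<Rightarrow> bit) set) \<Rightarrow> bool" where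
  "symplectic_polarity n \<theta> \<longleftrightarrow> (\<exists>f. alt_form n f \<and> (\<forall>U\<in>Verts n. \<theta> U = perp n f U))"

end

(* Since F_2 has no nontrivial field automorphism, a duality theta of PG(n,2) is the polarity
   U |-> U^perp of a nondegenerate bilinear form: x is orthogonal to y iff y lies in the
   hyperplane theta<x>.  Bilinearity comes from counting on lines, and theta U = U^perp follows
   by induction on the dimension of U.
   If the form is alternating, theta is a symplectic polarity, and splitting off hyperbolic
   planes shows that n + 1 is even.  Otherwise some x has (x,x) = 1; descending through
   hyperplanes x^perp that again contain such a vector yields, in every dimension i, a subspace U
   with U meeting U^perp only in 0.  Then U and theta U are complementary, hence opposite
   vertices, so theta is exceptional domestic. *)

theory Submission
  imports Defs "HOL-Library.FuncSet"
begin

type_synonym vec = "nat \<Rightarrow> bit"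

declare add_bit_eq_xor[simp del] mult_bit_eq_and[simp del]

section \<open>Vectors and subspaces over the field with two elements\<close>

lemma bit_add_self [simp]: "(a::bit) + a = 0"
  by (metis bit_2_eq_0 mult_2 mult_zero_left)

lemma bit_add_eq_0_iff [simp]: "(a::bit) + b = 0 \<longleftrightarrow> a = b"
  by (cases a; cases b) simp_all

lemma vadd_commute: "vadd x y = vadd y x"
  by (simp add: vadd_def add.commute)

lemma vadd_assoc: "vadd (vadd x y) z = vadd x (vadd y z)"
  by (simp add: vadd_def add.assoc)

lemma vadd_left_commute: "vadd x (vadd y z) = vadd y (vadd x z)"
  by (simp add: vadd_def add.left_commute)

lemmas vadd_ac = vadd_assoc vadd_commute vadd_left_commute

lemma vadd_self [simp]: "vadd x x = vzero"
  by (simp add: vadd_def vzero_def)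

lemma vadd_vzero [simp]: "vadd x vzero = x" "vadd vzero x = x"
  by (simp_all add: vadd_def vzero_def)

lemma vadd_cancel [simp]:
  "vadd x (vadd x y) = y" "vadd (vadd y x) x = y" "vadd x (vadd y x) = y" "vadd (vadd x y) x = y"
  by (simp_all add: vadd_def add.assoc[symmetric])

lemma vadd_eq_vzero_iff [simp]: "vadd x y = vzero \<longleftrightarrow> x = y" "vzero = vadd x y \<longleftrightarrow> x = y"
  by (metis vadd_cancel(1) vadd_self vadd_vzero(1))+

lemma vadd_left_cancel [simp]: "vadd a x = vadd a y \<longleftrightarrow> x = y"
  by (metis vadd_cancel(1))

lemma vadd_eq_self_iff [simp]:
  "vadd x y = y \<longleftrightarrow> x = vzero" "vadd x y = x \<longleftrightarrow> y = vzero"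
  "y = vadd x y \<longleftrightarrow> x = vzero" "x = vadd x y \<longleftrightarrow> y = vzero"
  by (metis vadd_cancel(2) vadd_self vadd_vzero(2), metis vadd_cancel(4) vadd_self vadd_vzero(1))+

lemma vadd_swap:
  assumes "vadd a b = vadd c d"
  shows "vadd a c = vadd b d"
proof -
  have "a i + c i = b i + d i" for i
    using fun_cong[OF assms[unfolded vadd_def], of i]
    by (cases "a i"; cases "b i"; cases "c i"; cases "d i") simp_all
  then show ?thesis
    by (simp add: vadd_def)
qed

lemma vzero_in_Vec [simp]: "vzero \<in> Vec n"
  by (simp add: Vec_def vzero_def)

lemma vadd_in_Vec [simp]: "x \<in> Vec n \<Longrightarrow> y \<in> Vec n \<Longrightarrow> vadd x y \<in> Vec n"
  by (simp add: Vec_def vadd_def)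

lemma card_UNIV_bit: "card (UNIV :: bit set) = 2"
proof -
  have UNIV_bit: "(UNIV :: bit set) = {0, 1}"
    by auto
  show ?thesis
    by (simp add: UNIV_bit)
qed

lemma card_Vec [simp]: "card (Vec n) = 2 ^ Suc n"
proof -
  define extend :: "vec \<Rightarrow> vec" where "extend f i = (if i \<le> n then f i else 0)" for f i
  have "Vec n = extend ` ({..n} \<rightarrow>\<^sub>E UNIV)"
  proof (intro equalityI subsetI)
    fix v assume "v \<in> Vec n"
    then have "v = extend (restrict v {..n})"
      by (auto simp: Vec_def extend_def fun_eq_iff)
    moreover have "restrict v {..n} \<in> {..n} \<rightarrow>\<^sub>E UNIV"
      by simp
    ultimately show "v \<in> extend ` ({..n} \<rightarrow>\<^sub>E UNIV)"
      by (rule rev_image_eqI[rotated])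
  qed (auto simp: Vec_def extend_def)
  moreover have "inj_on extend ({..n} \<rightarrow>\<^sub>E UNIV)"
  proof (rule inj_onI, rule ext)
    fix f g i assume f: "f \<in> {..n} \<rightarrow>\<^sub>E UNIV" and g: "g \<in> {..n} \<rightarrow>\<^sub>E UNIV"
      and eq: "extend f = extend g"
    show "f i = g i"
    proof (cases "i \<le> n")
      case True
      then show ?thesis
        using fun_cong[OF eq, of i] by (simp add: extend_def)
    next
      case False
      then show ?thesis
        using PiE_arb[OF f] PiE_arb[OF g] by simp
    qed
  qed
  ultimately show ?thesis
    by (simp add: card_image card_funcsetE card_UNIV_bit)
qed

lemma finite_Vec [simp]: "finite (Vec n)"
  by (rule card_ge_0_finite) simp

lemma subspace2_subset_Vec: "subspace2 n U \<Longrightarrow> U \<subseteq> Vec n"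
  by (simp add: subspace2_def)

lemma subspace2_vzero: "subspace2 n U \<Longrightarrow> vzero \<in> U"
  by (simp add: subspace2_def)

lemma subspace2_vadd: "subspace2 n U \<Longrightarrow> x \<in> U \<Longrightarrow> y \<in> U \<Longrightarrow> vadd x y \<in> U"
  by (simp add: subspace2_def)

lemma subspace2_finite: "subspace2 n U \<Longrightarrow> finite U"
  using subspace2_subset_Vec finite_Vec finite_subset by blast

lemma subspace2_Vec: "subspace2 n (Vec n)"
  by (simp add: subspace2_def)

lemma subspace2_vzero_only: "subspace2 n {vzero}"
  by (simp add: subspace2_def)

lemma subspace2_vadd_iff:
  "subspace2 n U \<Longrightarrow> x \<in> U \<Longrightarrow> vadd x y \<in> U \<longleftrightarrow> y \<in> U"
  using subspace2_vadd[of n U x "vadd x y"] subspace2_vadd[of n U x y] by auto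

definition adjoin :: "vec set \<Rightarrow> vec \<Rightarrow> vec set" where
  "adjoin U w = U \<union> vadd w ` U"

lemma adjoin_iff: "x \<in> adjoin U w \<longleftrightarrow> x \<in> U \<or> vadd w x \<in> U"
proof -
  have "x \<in> vadd w ` U \<longleftrightarrow> vadd w x \<in> U"
    using image_eqI[of x "vadd w" "vadd w x" U] by auto
  then show ?thesis
    by (simp add: adjoin_def)
qed

lemma subset_adjoin: "U \<subseteq> adjoin U w"
  by (simp add: adjoin_def)

lemma subspace2_adjoin:
  assumes U: "subspace2 n U" and w: "w \<in> Vec n"
  shows "subspace2 n (adjoin U w)"
  unfolding subspace2_def
proof (intro conjI ballI)
  show "adjoin U w \<subseteq> Vec n"
    using subspace2_subset_Vec[OF U] w by (auto simp: adjoin_def)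
  show "vzero \<in> adjoin U w"
    using subspace2_vzero[OF U] by (simp add: adjoin_iff)
  fix x y assume x: "x \<in> adjoin U w" and y: "y \<in> adjoin U w"
  have "vadd w (vadd x y) = vadd (vadd w x) y" "vadd w (vadd x y) = vadd x (vadd w y)"
    "vadd x y = vadd (vadd w x) (vadd w y)"
    by (simp_all add: vadd_ac)
  then show "vadd x y \<in> adjoin U w"
    using x y subspace2_vadd[OF U] unfolding adjoin_iff by metis
qed

lemma card_adjoin:
  assumes U: "subspace2 n U" and w: "w \<notin> U"
  shows "card (adjoin U w) = 2 * card U"
proof -
  have "vadd w a \<notin> U" if "a \<in> U" for a
    using subspace2_vadd_iff[OF U that, of w] w vadd_commute[of w a] by simp
  then have "U \<inter> vadd w ` U = {}"
    by blast
  moreover have "card (vadd w ` U) = card U"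
    by (simp add: card_image inj_on_def)
  ultimately show ?thesis
    using subspace2_finite[OF U] by (simp add: adjoin_def card_Un_disjoint)
qed

lemma adjoin_subset:
  "subspace2 n W \<Longrightarrow> U \<subseteq> W \<Longrightarrow> w \<in> W \<Longrightarrow> adjoin U w \<subseteq> W"
  using subspace2_vadd unfolding adjoin_def by blast

lemma subspace2_card_pow2:
  assumes U: "subspace2 n U"
  shows "\<exists>d. card U = 2 ^ d"
proof -
  have grow: "\<exists>d. card U = 2 ^ d" if "subspace2 n W" "W \<subseteq> U" "card W = 2 ^ m" for W m
    using that
  proof (induction "card U - card W" arbitrary: W m rule: less_induct)
    case less
    show ?case
    proof (cases "W = U")
      case True
      then show ?thesis
        using less.prems(3) by blast
    next
      case False
      then obtain w where w: "w \<in> U" "w \<notin> W"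
        using less.prems(2) by blast
      have W': "subspace2 n (adjoin W w)" "adjoin W w \<subseteq> U" "card (adjoin W w) = 2 ^ Suc m"
        using subspace2_adjoin[OF less.prems(1)] subspace2_subset_Vec[OF U] w
          adjoin_subset[OF U less.prems(2) w(1)] card_adjoin[OF less.prems(1) w(2)] less.prems(3)
        by auto
      have "card (adjoin W w) \<le> card U"
        using card_mono[OF subspace2_finite[OF U] W'(2)] .
      moreover have "card W < card (adjoin W w)"
        using W'(3) less.prems(3) by simp
      ultimately have "card U - card (adjoin W w) < card U - card W"
        by (simp add: diff_less_mono2)
      then show ?thesis
        using less.hyps W' by blast
    qed
  qed
  have "card {vzero} = 2 ^ 0" "{vzero} \<subseteq> U"
    using subspace2_vzero[OF U] by simp_all
  then show ?thesis
    using grow[OF subspace2_vzero_only] by blast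
qed

lemma vdim_eqI: "card U = 2 ^ d \<Longrightarrow> vdim U = d"
  unfolding vdim_def by (rule the_equality) simp_all

lemma card_subspace2: "subspace2 n U \<Longrightarrow> card U = 2 ^ vdim U"
  using subspace2_card_pow2 vdim_eqI by metis

lemma subspace2_eq_if_vdim_le:
  assumes U: "subspace2 n U" and W: "subspace2 n W" and "U \<subseteq> W" "vdim W \<le> vdim U"
  shows "U = W"
proof -
  have "card W \<le> card U"
    using assms(4) by (simp add: card_subspace2[OF U] card_subspace2[OF W])
  moreover have "card U \<le> card W"
    using card_mono[OF subspace2_finite[OF W] assms(3)] .
  ultimately show ?thesis
    using card_subset_eq[OF subspace2_finite[OF W] assms(3)] by simp
qed

lemma vdim_mono:
  assumes "subspace2 n U" "subspace2 n W" "U \<subseteq> W"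
  shows "vdim U \<le> vdim W"
  using card_mono[OF subspace2_finite[OF assms(2)] assms(3)]
  by (simp add: card_subspace2[OF assms(1)] card_subspace2[OF assms(2)])

lemma subspace2_exists_card:
  assumes U: "subspace2 n U" and m: "m \<le> vdim U"
  shows "\<exists>W. subspace2 n W \<and> W \<subseteq> U \<and> card W = 2 ^ m"
  using m
proof (induction m)
  case 0
  show ?case
    using subspace2_vzero_only subspace2_vzero[OF U] by (intro exI[of _ "{vzero}"]) auto
next
  case (Suc m)
  then obtain W where W: "subspace2 n W" "W \<subseteq> U" "card W = 2 ^ m"
    by auto
  have "W \<noteq> U"
    using W(3) card_subspace2[OF U] Suc.prems by auto
  then obtain w where w: "w \<in> U" "w \<notin> W"
    using W(2) by blast
  then show ?case
    using subspace2_adjoin[OF W(1)] adjoin_subset[OF U W(2) w(1)] card_adjoin[OF W(1) w(2)] W(3)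
      subspace2_subset_Vec[OF U] by (intro exI[of _ "adjoin W w"]) auto
qed

lemma additive_kernel:
  fixes \<psi> :: "vec \<Rightarrow> bit"
  assumes W: "subspace2 n W"
    and additive: "\<And>x y. x \<in> W \<Longrightarrow> y \<in> W \<Longrightarrow> \<psi> (vadd x y) = \<psi> x + \<psi> y"
    and w0: "w0 \<in> W" "\<psi> w0 = 1"
  shows "subspace2 n {w\<in>W. \<psi> w = 0}" and "card W = 2 * card {w\<in>W. \<psi> w = 0}"
proof -
  let ?K = "{w\<in>W. \<psi> w = 0}"
  have "\<psi> vzero = 0"
    using additive[of vzero vzero] subspace2_vzero[OF W] by simp
  then show K: "subspace2 n ?K"
    using W additive by (auto simp: subspace2_def)
  have "adjoin ?K w0 = W"
  proof
    show "adjoin ?K w0 \<subseteq> W"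
      by (rule adjoin_subset[OF W _ w0(1)]) blast
    show "W \<subseteq> adjoin ?K w0"
      using additive w0 subspace2_vadd[OF W w0(1)] by (auto simp: adjoin_iff)
  qed
  then show "card W = 2 * card ?K"
    using card_adjoin[OF K, of w0] w0(2) by simp
qed

lemma index2_vadd_mem:
  assumes H: "subspace2 n H" and W: "subspace2 n W" "H \<subseteq> W" and index: "card W = 2 * card H"
    and y: "y \<in> W" "y \<notin> H" and z: "z \<in> W" "z \<notin> H"
  shows "vadd y z \<in> H"
proof -
  have "adjoin H z = W"
    using card_subset_eq[OF subspace2_finite[OF W(1)] adjoin_subset[OF W z(1)]]
      card_adjoin[OF H z(2)] index by simp
  then show ?thesis
    using y by (auto simp: adjoin_iff vadd_commute)
qed

lemma direct_sum_Vec: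
  assumes A: "subspace2 n A" and B: "subspace2 n B" and AB: "A \<inter> B = {vzero}"
    and card: "card A * card B = card (Vec n)" and v: "v \<in> Vec n"
  shows "\<exists>a\<in>A. \<exists>b\<in>B. v = vadd a b"
proof -
  let ?sum = "\<lambda>(a, b). vadd a b"
  have "inj_on ?sum (A \<times> B)"
  proof (rule inj_onI, clarify)
    fix a b a' b' assume ab: "a \<in> A" "b \<in> B" "a' \<in> A" "b' \<in> B" and eq: "vadd a b = vadd a' b'"
    have "vadd a a' = vadd b b'"
      using vadd_swap[OF eq] .
    then have "vadd a a' \<in> A \<inter> B"
      using subspace2_vadd[OF A ab(1,3)] subspace2_vadd[OF B ab(2,4)] by simp
    then have "a = a'"
      using AB by auto
    then show "a = a' \<and> b = b'"
      using eq by simp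
  qed
  then have "card (?sum ` (A \<times> B)) = card (Vec n)"
    using card by (simp add: card_image card_cartesian_product)
  moreover have "?sum ` (A \<times> B) \<subseteq> Vec n"
    using subspace2_subset_Vec[OF A] subspace2_subset_Vec[OF B] by (auto simp: subset_iff)
  ultimately have "?sum ` (A \<times> B) = Vec n"
    using card_subset_eq[OF finite_Vec] by blast
  then show ?thesis
    using v by force
qed

lemma two_elements_except:
  assumes "finite A" "3 \<le> card A"
  obtains a b where "a \<in> A" "b \<in> A" "a \<noteq> z" "b \<noteq> z" "a \<noteq> b"
proof -
  have "2 \<le> card (A - {z})"
    using assms by (cases "z \<in> A") (simp_all add: card_Diff_singleton)
  then obtain S where "S \<subseteq> A - {z}" "card S = 2"
    by (rule obtain_subset_with_card_n)
  then show ?thesis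
    using that by (auto simp: card_2_iff)
qed

section \<open>Points, vertices and flags of the projective space\<close>

definition pt :: "vec \<Rightarrow> vec set" where
  "pt x = {vzero, x}"

lemma subspace2_pt: "x \<in> Vec n \<Longrightarrow> subspace2 n (pt x)"
  unfolding pt_def subspace2_def by auto

lemma card_pt: "x \<noteq> vzero \<Longrightarrow> card (pt x) = 2"
  unfolding pt_def by simp

lemma pt_inj: "x \<noteq> vzero \<Longrightarrow> pt x = pt y \<Longrightarrow> x = y"
  unfolding pt_def by (metis doubleton_eq_iff)

lemma Verts_subspace2: "U \<in> Verts n \<Longrightarrow> subspace2 n U"
  by (simp add: Verts_def)

lemma Verts_vdim: "U \<in> Verts n \<Longrightarrow> 1 \<le> vdim U \<and> vdim U \<le> n"
  by (simp add: Verts_def)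

lemma card_Verts: "U \<in> Verts n \<Longrightarrow> card U = 2 ^ vdim U"
  using Verts_subspace2 card_subspace2 by blast

lemma subspace2_in_Verts:
  "subspace2 n U \<Longrightarrow> card U = 2 ^ k \<Longrightarrow> 1 \<le> k \<Longrightarrow> k \<le> n \<Longrightarrow> U \<in> Verts n \<and> vdim U = k"
  using vdim_eqI by (simp add: Verts_def)

lemma pt_in_Verts:
  "x \<in> Vec n \<Longrightarrow> x \<noteq> vzero \<Longrightarrow> 1 \<le> n \<Longrightarrow> pt x \<in> Verts n \<and> vdim (pt x) = 1"
  using subspace2_in_Verts[of n "pt x" 1] subspace2_pt card_pt by simp

lemma Verts_vdim_1_pt:
  assumes U: "U \<in> Verts n" "vdim U = 1"
  shows "\<exists>x\<in>Vec n. x \<noteq> vzero \<and> U = pt x"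
proof -
  have sub: "subspace2 n U"
    using U(1) by (rule Verts_subspace2)
  have "card U = 2"
    using card_Verts[OF U(1)] U(2) by simp
  then obtain a b where ab: "U = {a, b}" "a \<noteq> b"
    by (auto simp: card_2_iff)
  moreover have "vzero \<in> U"
    using subspace2_vzero[OF sub] .
  ultimately obtain x where "U = pt x" "x \<noteq> vzero"
    unfolding pt_def by (metis empty_iff insert_commute insertE)
  then show ?thesis
    using subspace2_subset_Vec[OF sub] by (auto simp: pt_def)
qed

lemma subspace2_line: "x \<in> Vec n \<Longrightarrow> y \<in> Vec n \<Longrightarrow> subspace2 n {vzero, x, y, vadd x y}"
  unfolding subspace2_def using vadd_commute[of y x] by auto

lemma card_line:
  assumes "x \<noteq> vzero" "y \<noteq> vzero" "x \<noteq> y"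
  shows "card {vzero, x, y, vadd x y} = 4"
  using assms by simp

lemma simplex_subset_if_vdim_le:
  assumes S: "simplex n S" and UW: "U \<in> S" "W \<in> S" and dim: "vdim U \<le> vdim W"
  shows "U \<subseteq> W"
proof -
  have sub: "subspace2 n U" "subspace2 n W"
    using S UW by (auto simp: simplex_def Verts_def)
  have "U \<subseteq> W \<or> W \<subseteq> U"
    using S UW by (simp add: simplex_def incident_def)
  then show ?thesis
    using subspace2_eq_if_vdim_le[OF sub(2,1)] dim by auto
qed

lemma simplex_vdim_inj:
  "simplex n S \<Longrightarrow> U \<in> S \<Longrightarrow> W \<in> S \<Longrightarrow> vdim U = vdim W \<Longrightarrow> U = W"
  using simplex_subset_if_vdim_le[of n S U W] simplex_subset_if_vdim_le[of n S W U] by auto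

text \<open>Indices \<open>0\<close> and \<open>Suc n\<close> carry the trivial subspaces \<open>{vzero}\<close> and \<open>Vec n\<close>, which
  keeps the index arithmetic of opposition uniform; a chamber is \<open>c ` {1..n}\<close>.\<close>

definition full_flag :: "nat \<Rightarrow> (nat \<Rightarrow> vec set) \<Rightarrow> bool" where
  "full_flag n c \<longleftrightarrow> (\<forall>i\<le>Suc n. subspace2 n (c i) \<and> card (c i) = 2 ^ i)
     \<and> (\<forall>i j. i \<le> j \<longrightarrow> j \<le> Suc n \<longrightarrow> c i \<subseteq> c j)"

lemma full_flag_subspace2:
  "full_flag n c \<Longrightarrow> i \<le> Suc n \<Longrightarrow> subspace2 n (c i) \<and> card (c i) = 2 ^ i"
  by (simp add: full_flag_def)

lemma full_flag_mono: "full_flag n c \<Longrightarrow> i \<le> j \<Longrightarrow> j \<le> Suc n \<Longrightarrow> c i \<subseteq> c j"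
  by (simp add: full_flag_def)

lemma full_flag_Verts:
  "full_flag n c \<Longrightarrow> i \<in> {1..n} \<Longrightarrow> c i \<in> Verts n \<and> vdim (c i) = i"
  using subspace2_in_Verts[of n "c i" i] full_flag_subspace2[of n c i] by auto

lemma full_flag_extend:
  assumes V: "\<And>i. i \<in> {1..n} \<Longrightarrow> c i \<in> Verts n \<and> vdim (c i) = i"
    and mono: "\<And>i j. i \<in> {1..n} \<Longrightarrow> j \<in> {1..n} \<Longrightarrow> i \<le> j \<Longrightarrow> c i \<subseteq> c j"
  shows "full_flag n (\<lambda>i. if i = 0 then {vzero} else if i \<le> n then c i else Vec n)"
    (is "full_flag n ?c")
proof -
  have c_sub: "subspace2 n (?c i) \<and> card (?c i) = 2 ^ i" if "i \<le> Suc n" for i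
  proof -
    have "i = 0 \<or> 1 \<le> i \<and> i \<le> n \<or> i = Suc n"
      using that by linarith
    then show ?thesis
      using V[of i] Verts_subspace2 card_Verts subspace2_vzero_only subspace2_Vec by auto
  qed
  have "?c i \<subseteq> ?c j" if "i \<le> j" "j \<le> Suc n" for i j
  proof -
    have "i = 0 \<or> j = Suc n \<or> 1 \<le> i \<and> j \<le> n"
      using that by linarith
    then show ?thesis
      using mono[of i j] that subspace2_vzero[of n "?c j"] c_sub[of j]
        subspace2_subset_Vec[of n "?c i"] c_sub[of i] by auto
  qed
  then show ?thesis
    unfolding full_flag_def using c_sub by blast
qed

lemma chamber_full_flag:
  assumes C: "chamber n C"
  obtains c where "full_flag n c" "C = c ` {1..n}"
proof -
  have S: "simplex n C" and types: "vdim ` C = {1..n}"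
    using C by (auto simp: chamber_def stype_def)
  define c where "c i = (SOME V. V \<in> C \<and> vdim V = i)" for i
  have c_mem: "c i \<in> C \<and> vdim (c i) = i" if "i \<in> {1..n}" for i
  proof -
    have "\<exists>V. V \<in> C \<and> vdim V = i"
      using that types by (metis imageE)
    then show ?thesis
      unfolding c_def by (rule someI_ex)
  qed
  have C_eq: "C = c ` {1..n}"
  proof
    show "C \<subseteq> c ` {1..n}"
    proof
      fix V assume V: "V \<in> C"
      then have d: "vdim V \<in> {1..n}"
        using types by blast
      then have "c (vdim V) = V"
        using c_mem simplex_vdim_inj[OF S _ V] by blast
      then show "V \<in> c ` {1..n}"
        using d by (metis imageI)
    qed
  qed (use c_mem in blast)
  have "c i \<in> Verts n \<and> vdim (c i) = i" if "i \<in> {1..n}" for i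
    using c_mem[OF that] S by (auto simp: simplex_def)
  moreover have "c i \<subseteq> c j" if "i \<in> {1..n}" "j \<in> {1..n}" "i \<le> j" for i j
    using simplex_subset_if_vdim_le[OF S] c_mem that by metis
  ultimately have "full_flag n (\<lambda>i. if i = 0 then {vzero} else if i \<le> n then c i else Vec n)"
    by (rule full_flag_extend)
  moreover have "C = (\<lambda>i. if i = 0 then {vzero} else if i \<le> n then c i else Vec n) ` {1..n}"
    unfolding C_eq by (rule image_cong) auto
  ultimately show ?thesis
    by (rule that)
qed

lemma full_flag_chamber:
  assumes c: "full_flag n c"
  shows "chamber n (c ` {1..n})"
proof -
  have "c i \<subseteq> c j \<or> c j \<subseteq> c i" if "i \<in> {1..n}" "j \<in> {1..n}" for i j
    using full_flag_mono[OF c, of i j] full_flag_mono[OF c, of j i] that by (cases "i \<le> j") auto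
  then have "simplex n (c ` {1..n})"
    using full_flag_Verts[OF c] by (auto simp: simplex_def incident_def)
  moreover have "stype (c ` {1..n}) = {1..n}"
    using full_flag_Verts[OF c] by (force simp: stype_def image_image)
  ultimately show ?thesis
    by (simp add: chamber_def)
qed

lemma opp_chamber_full_flags:
  assumes c: "full_flag n c" and w: "full_flag n w"
    and opp: "\<And>i. i \<in> {1..n} \<Longrightarrow> w i \<inter> c (Suc n - i) = {vzero}"
  shows "opp_chamber n (c ` {1..n}) (w ` {1..n})"
  unfolding opp_chamber_def
proof (intro conjI full_flag_chamber c w ballI impI)
  fix U W assume "U \<in> c ` {1..n}" "W \<in> w ` {1..n}" and dims: "vdim U + vdim W = n + 1"
  then obtain j i where ji: "j \<in> {1..n}" "U = c j" "i \<in> {1..n}" "W = w i"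
    by blast
  then have "j = Suc n - i"
    using dims full_flag_Verts[OF c] full_flag_Verts[OF w] by auto
  then show "U \<inter> W = {vzero}"
    using opp[of i] ji by blast
qed

lemma opp_chamber_sym: "opp_chamber n C D \<Longrightarrow> opp_chamber n D C"
  unfolding opp_chamber_def by (metis Int_commute add.commute)

section \<open>Complementary vertices are opposite\<close>

lemma adjoin_inter_eq_vzero:
  assumes W: "subspace2 n W" and A: "subspace2 n A" and B: "subspace2 n B" and "A \<subseteq> B"
    and WB: "W \<inter> B = {vzero}" and w: "w \<in> B" "w \<notin> A"
  shows "adjoin W w \<inter> A = {vzero}"
proof -
  have "z = vzero" if z: "z \<in> adjoin W w" "z \<in> A" for z
  proof -
    have zB: "z \<in> B" and wz: "vadd w z \<in> B"
      using z(2) \<open>A \<subseteq> B\<close> subspace2_vadd[OF B w(1)] by auto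
    show ?thesis
    proof (cases "z \<in> W")
      case True
      then show ?thesis
        using zB WB by blast
    next
      case False
      then have "vadd w z \<in> W"
        using z(1) by (simp add: adjoin_iff)
      then have "vadd w z = vzero"
        using wz WB by blast
      then have "z = w"
        by simp
      then show ?thesis
        using z(2) w(2) by simp
    qed
  qed
  moreover have "vzero \<in> adjoin W w" "vzero \<in> A"
    using subspace2_vzero[OF W] subspace2_vzero[OF A] subset_adjoin by auto
  ultimately show ?thesis
    by blast
qed

lemma complement_meets_gap:
  assumes U: "subspace2 n U" and T: "subspace2 n T" and UT: "U \<inter> T = {vzero}"
    and card: "card U * card T = card (Vec n)"
    and A: "subspace2 n A" and B: "subspace2 n B" and "U \<subseteq> A" "A \<subset> B"
  shows "\<exists>w\<in>T \<inter> B. w \<notin> A"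
proof (rule ccontr)
  assume "\<not> ?thesis"
  then have TB: "T \<inter> B \<subseteq> A"
    by blast
  have "B \<subseteq> A"
  proof
    fix v assume v: "v \<in> B"
    then obtain u t where ut: "u \<in> U" "t \<in> T" "v = vadd u t"
      using direct_sum_Vec[OF U T UT card] subspace2_subset_Vec[OF B] by blast
    have uA: "u \<in> A"
      using ut(1) \<open>U \<subseteq> A\<close> by blast
    then have "t \<in> B"
      using subspace2_vadd_iff[OF B, of u t] v ut(3) \<open>A \<subset> B\<close> by blast
    then have "t \<in> A"
      using TB ut(2) by blast
    then show "v \<in> A"
      using subspace2_vadd[OF A uA] ut(3) by simp
  qed
  then show False
    using \<open>A \<subset> B\<close> by blast
qed

text \<open>The opposite flag through a complement \<open>T\<close> of \<open>c k\<close> is built upwards: \<open>w (Suc m)\<close>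
  adjoins to \<open>w m\<close> a vector of \<open>c (Suc n - m)\<close> outside \<open>c (Suc n - Suc m)\<close>, chosen inside
  \<open>T\<close> as long as \<open>w (Suc m)\<close> has to lie in \<open>T\<close>.\<close>

context
  fixes n k :: nat and c :: "nat \<Rightarrow> vec set" and T :: "vec set"
  assumes c: "full_flag n c" and k: "k \<le> Suc n"
    and T: "subspace2 n T" "card T = 2 ^ (Suc n - k)" "c k \<inter> T = {vzero}"
begin

definition opp_partial_flag :: "nat \<Rightarrow> (nat \<Rightarrow> vec set) \<Rightarrow> bool" where
  "opp_partial_flag m w \<longleftrightarrow>
     (\<forall>i\<le>m. subspace2 n (w i) \<and> card (w i) = 2 ^ i \<and> w i \<inter> c (Suc n - i) = {vzero}
        \<and> (i \<le> Suc n - k \<longrightarrow> w i \<subseteq> T))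
     \<and> (\<forall>i j. i \<le> j \<longrightarrow> j \<le> m \<longrightarrow> w i \<subseteq> w j)"

lemma opp_partial_flagD:
  assumes "opp_partial_flag m w" "i \<le> m"
  shows "subspace2 n (w i)" "card (w i) = 2 ^ i" "w i \<inter> c (Suc n - i) = {vzero}"
    "i \<le> Suc n - k \<Longrightarrow> w i \<subseteq> T"
  using assms by (simp_all add: opp_partial_flag_def)

lemma opp_partial_flag_mono:
  "opp_partial_flag m w \<Longrightarrow> i \<le> j \<Longrightarrow> j \<le> m \<Longrightarrow> w i \<subseteq> w j"
  by (simp add: opp_partial_flag_def)

lemma opp_partial_flag_0: "opp_partial_flag 0 (\<lambda>_. {vzero})"
  using subspace2_vzero_only subspace2_vzero[OF T(1)]
    subspace2_vzero[OF conjunct1[OF full_flag_subspace2[OF c, of "Suc n"]]]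
  by (auto simp: opp_partial_flag_def)

lemma opp_partial_flag_extend:
  assumes w: "opp_partial_flag m w" and W: "subspace2 n W" "card W = 2 ^ Suc m"
    "W \<inter> c (Suc n - Suc m) = {vzero}" "Suc m \<le> Suc n - k \<Longrightarrow> W \<subseteq> T" "w m \<subseteq> W"
  shows "opp_partial_flag (Suc m) (w(Suc m := W))"
  unfolding opp_partial_flag_def
proof (rule conjI; intro allI impI)
  fix i assume "i \<le> Suc m"
  then consider "i \<le> m" | "i = Suc m"
    by linarith
  then show "subspace2 n ((w(Suc m := W)) i) \<and> card ((w(Suc m := W)) i) = 2 ^ i
      \<and> (w(Suc m := W)) i \<inter> c (Suc n - i) = {vzero} \<and> (i \<le> Suc n - k \<longrightarrow> (w(Suc m := W)) i \<subseteq> T)"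
  proof cases
    case 1
    then show ?thesis
      using opp_partial_flagD[OF w 1] by simp
  qed (use W in simp)
next
  fix i j assume "i \<le> j" "j \<le> Suc m"
  then consider "j \<le> m" | "i \<le> m" "j = Suc m" | "i = Suc m" "j = Suc m"
    by linarith
  then show "(w(Suc m := W)) i \<subseteq> (w(Suc m := W)) j"
  proof cases
    case 1
    then show ?thesis
      using opp_partial_flag_mono[OF w \<open>i \<le> j\<close>] \<open>i \<le> j\<close> by simp
  next
    case 2
    then show ?thesis
      using opp_partial_flag_mono[OF w 2(1) order.refl] W(5) by simp
  qed simp
qed

lemma exists_next_vector:
  assumes m: "m < Suc n"
  obtains v where "v \<in> c (Suc n - m)" "v \<notin> c (Suc n - Suc m)" "Suc m \<le> Suc n - k \<Longrightarrow> v \<in> T"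
proof -
  define j where "j = Suc n - Suc m"
  have j: "Suc n - m = Suc j" "Suc j \<le> Suc n"
    using m by (auto simp: j_def)
  have cj: "subspace2 n (c j)" "subspace2 n (c (Suc j))" "c j \<subseteq> c (Suc j)"
    using full_flag_subspace2[OF c] full_flag_mono[OF c] j(2) by auto
  have "card (c j) < card (c (Suc j))"
    using full_flag_subspace2[OF c] j(2) by simp
  then have gap: "c j \<subset> c (Suc j)"
    using cj(3) by auto
  have c_eq: "c (Suc n - m) = c (Suc j)" "c (Suc n - Suc m) = c j"
    using j(1) by (simp_all add: j_def)
  show ?thesis
  proof (cases "Suc m \<le> Suc n - k")
    case True
    then have "c k \<subseteq> c j"
      using full_flag_mono[OF c] j(2) by (simp add: j_def)
    moreover have ck: "subspace2 n (c k)" "card (c k) = 2 ^ k"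
      using full_flag_subspace2[OF c k] by auto
    moreover have "card (c k) * card T = card (Vec n)"
      using ck(2) T(2) k by (simp flip: power_add)
    ultimately obtain v where "v \<in> T \<inter> c (Suc j)" "v \<notin> c j"
      using complement_meets_gap[OF ck(1) T(1) T(3) _ cj(1,2) _ gap] by blast
    then show ?thesis
      using that[unfolded c_eq] by blast
  next
    case False
    obtain v where "v \<in> c (Suc j)" "v \<notin> c j"
      using gap by blast
    then show ?thesis
      using that[unfolded c_eq] False by blast
  qed
qed

lemma opp_partial_flag_Suc:
  assumes w: "opp_partial_flag m w" and m: "m < Suc n"
  shows "\<exists>w'. opp_partial_flag (Suc m) w'"
proof -
  obtain v where v: "v \<in> c (Suc n - m)" "v \<notin> c (Suc n - Suc m)"
    and vT: "Suc m \<le> Suc n - k \<Longrightarrow> v \<in> T"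
    using exists_next_vector[OF m] by blast
  have c: "subspace2 n (c (Suc n - Suc m))" "subspace2 n (c (Suc n - m))"
    "c (Suc n - Suc m) \<subseteq> c (Suc n - m)"
    using full_flag_subspace2[OF c] full_flag_mono[OF c] by auto
  note wm = opp_partial_flagD[OF w order.refl]
  have v_Vec: "v \<in> Vec n"
    using v(1) subspace2_subset_Vec[OF c(2)] by blast
  have "v \<noteq> vzero"
    using v(2) subspace2_vzero[OF c(1)] by blast
  then have v_new: "v \<notin> w m"
    using v(1) wm(3) by blast
  have "opp_partial_flag (Suc m) (w(Suc m := adjoin (w m) v))"
    using opp_partial_flag_extend[OF w subspace2_adjoin[OF wm(1) v_Vec]] card_adjoin[OF wm(1) v_new]
      wm(2) adjoin_inter_eq_vzero[OF wm(1) c wm(3) v] adjoin_subset[OF T(1) wm(4) vT] m subset_adjoin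
    by simp
  then show ?thesis
    by blast
qed

lemma opposite_flag_through:
  obtains w where "full_flag n w" "w (Suc n - k) = T"
    "\<And>i. i \<le> Suc n \<Longrightarrow> w i \<inter> c (Suc n - i) = {vzero}"
proof -
  have "\<exists>w. opp_partial_flag m w" if "m \<le> Suc n" for m
    using that
  proof (induction m)
    case 0
    show ?case
      using opp_partial_flag_0 by blast
  next
    case (Suc m)
    then obtain w where "opp_partial_flag m w"
      by auto
    moreover have "m < Suc n"
      using Suc.prems by simp
    ultimately show ?case
      by (rule opp_partial_flag_Suc)
  qed
  then obtain w where w: "opp_partial_flag (Suc n) w"
    by blast
  then have flag: "full_flag n w"
    unfolding full_flag_def using opp_partial_flagD(1,2) opp_partial_flag_mono by blast
  have "w (Suc n - k) \<subseteq> T" "card (w (Suc n - k)) = card T"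
    using opp_partial_flagD(2,4)[OF w, of "Suc n - k"] T(2) by auto
  then have "w (Suc n - k) = T"
    using card_subset_eq[OF subspace2_finite[OF T(1)]] by blast
  moreover have "w i \<inter> c (Suc n - i) = {vzero}" if "i \<le> Suc n" for i
    using opp_partial_flagD(3)[OF w that] .
  ultimately show ?thesis
    using that flag by blast
qed

end

lemma exists_opp_chamber_through:
  assumes C: "chamber n C" and U: "U \<in> C" and V: "V \<in> Verts n"
    and dims: "vdim U + vdim V = Suc n" and UV: "U \<inter> V = {vzero}"
  shows "\<exists>D. chamber n D \<and> V \<in> D \<and> opp_chamber n C D"
proof -
  obtain c where c: "full_flag n c" and C_eq: "C = c ` {1..n}"
    using chamber_full_flag[OF C] by blast
  define k where "k = vdim U"
  have U_Verts: "U \<in> Verts n"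
    using C U by (auto simp: chamber_def simplex_def)
  then have k: "k \<in> {1..n}" "Suc n - k = vdim V"
    using dims Verts_vdim[of U n] by (auto simp: k_def)
  have "c k \<in> C" "vdim (c k) = vdim U"
    using C_eq full_flag_Verts[OF c k(1)] k(1) by (auto simp: k_def)
  then have "c k = U"
    using simplex_vdim_inj[OF _ _ U] C by (auto simp: chamber_def)
  then have V_compl: "k \<le> Suc n" "card V = 2 ^ (Suc n - k)" "c k \<inter> V = {vzero}"
    using k card_Verts[OF V] UV by auto
  obtain w where w: "full_flag n w" "w (Suc n - k) = V"
    and opp: "\<And>i. i \<le> Suc n \<Longrightarrow> w i \<inter> c (Suc n - i) = {vzero}"
    using opposite_flag_through[OF c V_compl(1) Verts_subspace2[OF V] V_compl(2,3)] by blast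
  have "vdim V \<in> {1..n}"
    using Verts_vdim[OF V] by simp
  then have "V \<in> w ` {1..n}"
    using w(2) k(2) by (metis image_eqI)
  moreover have "opp_chamber n C (w ` {1..n})"
    unfolding C_eq by (rule opp_chamber_full_flags[OF c w(1) opp]) simp
  ultimately show ?thesis
    using full_flag_chamber[OF w(1)] by blast
qed

lemma opp_simplex_complementary:
  assumes U: "U \<in> Verts n" and V: "V \<in> Verts n"
    and dims: "vdim U + vdim V = Suc n" and UV: "U \<inter> V = {vzero}"
  shows "opp_simplex n {U} {V}"
  unfolding opp_simplex_def
proof (intro conjI allI impI)
  show "simplex n {U}" "simplex n {V}"
    using U V by (auto simp: simplex_def incident_def)
  fix C assume C: "chamber n C \<and> {U} \<subseteq> C"
  then obtain D where "chamber n D" "V \<in> D" "opp_chamber n C D"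
    using exists_opp_chamber_through[OF conjunct1[OF C] _ V dims UV] by auto
  then show "\<exists>D. chamber n D \<and> {V} \<subseteq> D \<and> opp_chamber n C D"
    by blast
next
  fix D assume D: "chamber n D \<and> {V} \<subseteq> D"
  have "vdim V + vdim U = Suc n" "V \<inter> U = {vzero}"
    using dims UV by auto
  then obtain C where "chamber n C" "U \<in> C" "opp_chamber n D C"
    using exists_opp_chamber_through[OF conjunct1[OF D] _ U] D by auto
  then show "\<exists>C. chamber n C \<and> {U} \<subseteq> C \<and> opp_chamber n C D"
    using opp_chamber_sym by blast
qed

section \<open>A duality is the polarity of a bilinear form\<close>

locale PG_duality =
  fixes n :: nat and \<theta> :: "vec set \<Rightarrow> vec set"
  assumes two_le_n: "2 \<le> n" and duality: "duality n \<theta>"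
begin

lemma theta_Verts: "U \<in> Verts n \<Longrightarrow> \<theta> U \<in> Verts n"
  using duality bij_betw_apply by (auto simp: duality_def)

lemma theta_inj: "U \<in> Verts n \<Longrightarrow> W \<in> Verts n \<Longrightarrow> \<theta> U = \<theta> W \<Longrightarrow> U = W"
  using duality bij_betw_imp_inj_on inj_onD by (metis duality_def)

lemma theta_surj: "W \<in> Verts n \<Longrightarrow> \<exists>U\<in>Verts n. \<theta> U = W"
  using duality bij_betw_imp_surj_on by (metis duality_def imageE)

lemma theta_incident:
  "U \<in> Verts n \<Longrightarrow> W \<in> Verts n \<Longrightarrow> incident (\<theta> U) (\<theta> W) \<longleftrightarrow> incident U W"
  using duality by (simp add: duality_def)

lemma vdim_theta: "U \<in> Verts n \<Longrightarrow> vdim (\<theta> U) = Suc n - vdim U"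
  using duality by (simp add: duality_def)

lemma card_theta: "U \<in> Verts n \<Longrightarrow> card (\<theta> U) = 2 ^ (Suc n - vdim U)"
  using card_Verts[OF theta_Verts] vdim_theta by simp

lemma theta_antimono:
  assumes U: "U \<in> Verts n" and W: "W \<in> Verts n" and UW: "U \<subseteq> W"
  shows "\<theta> W \<subseteq> \<theta> U"
proof -
  have sub: "subspace2 n (\<theta> U)" "subspace2 n (\<theta> W)"
    using theta_Verts[OF U] theta_Verts[OF W] by (auto simp: Verts_subspace2)
  have "incident (\<theta> U) (\<theta> W)"
    using theta_incident[OF U W] UW by (simp add: incident_def)
  moreover have "vdim (\<theta> W) \<le> vdim (\<theta> U)"
    using vdim_theta[OF U] vdim_theta[OF W] vdim_mono[OF Verts_subspace2[OF U] Verts_subspace2[OF W] UW]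
    by simp
  ultimately show ?thesis
    using subspace2_eq_if_vdim_le[OF sub] unfolding incident_def by blast
qed

lemma theta_subset_iff:
  assumes U: "U \<in> Verts n" and W: "W \<in> Verts n"
  shows "\<theta> W \<subseteq> \<theta> U \<longleftrightarrow> U \<subseteq> W"
proof
  assume sub: "\<theta> W \<subseteq> \<theta> U"
  then have "U \<subseteq> W \<or> W \<subseteq> U"
    using theta_incident[OF U W] by (simp add: incident_def)
  moreover have "W \<subseteq> U \<Longrightarrow> U = W"
    using theta_antimono[OF W U] sub theta_inj[OF U W] by blast
  ultimately show "U \<subseteq> W"
    by blast
qed (rule theta_antimono[OF U W])

lemma pt_Verts: "x \<in> Vec n \<Longrightarrow> x \<noteq> vzero \<Longrightarrow> pt x \<in> Verts n"
  using pt_in_Verts two_le_n by simp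

abbreviation hyp :: "vec \<Rightarrow> vec set" where
  "hyp x \<equiv> \<theta> (pt x)"

lemma subspace2_hyp: "x \<in> Vec n \<Longrightarrow> x \<noteq> vzero \<Longrightarrow> subspace2 n (hyp x)"
  using theta_Verts[OF pt_Verts] Verts_subspace2 by blast

lemma card_hyp: "x \<in> Vec n \<Longrightarrow> x \<noteq> vzero \<Longrightarrow> card (hyp x) = 2 ^ n"
  using card_theta[OF pt_Verts] pt_in_Verts two_le_n by simp

lemma hyp_inj:
  "x \<in> Vec n \<Longrightarrow> x \<noteq> vzero \<Longrightarrow> y \<in> Vec n \<Longrightarrow> y \<noteq> vzero \<Longrightarrow> hyp x = hyp y \<Longrightarrow> x = y"
  using theta_inj pt_Verts pt_inj by metis

definition form :: "vec \<Rightarrow> vec \<Rightarrow> bit" where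
  "form x y = (if x = vzero \<or> y \<in> hyp x then 0 else 1)"

lemma form_vzero_left [simp]: "form vzero y = 0"
  by (simp add: form_def)

lemma form_eq_0_iff: "x \<noteq> vzero \<Longrightarrow> form x y = 0 \<longleftrightarrow> y \<in> hyp x"
  by (simp add: form_def)

lemma form_vzero_right [simp]: "x \<in> Vec n \<Longrightarrow> form x vzero = 0"
  using subspace2_vzero[OF subspace2_hyp] by (cases "x = vzero") (auto simp: form_def)

lemma form_add_right:
  assumes x: "x \<in> Vec n" and y: "y \<in> Vec n" and z: "z \<in> Vec n"
  shows "form x (vadd y z) = form x y + form x z"
proof (cases "x = vzero")
  case False
  note H = subspace2_hyp[OF x False]
  have "card (Vec n) = 2 * card (hyp x)"
    using card_hyp[OF x False] by simp
  then have "y \<notin> hyp x \<Longrightarrow> z \<notin> hyp x \<Longrightarrow> vadd y z \<in> hyp x"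
    using index2_vadd_mem[OF H subspace2_Vec subspace2_subset_Vec[OF H]] y z by blast
  moreover have "y \<in> hyp x \<Longrightarrow> vadd y z \<in> hyp x \<longleftrightarrow> z \<in> hyp x"
    "z \<in> hyp x \<Longrightarrow> vadd y z \<in> hyp x \<longleftrightarrow> y \<in> hyp x"
    using subspace2_vadd_iff[OF H] vadd_commute by metis+
  ultimately show ?thesis
    using False by (auto simp: form_def)
qed simp

lemma hyp_not_subset:
  assumes x: "x \<in> Vec n" "x \<noteq> vzero" and y: "y \<in> Vec n" "y \<noteq> vzero" and "x \<noteq> y"
  shows "\<not> hyp x \<subseteq> hyp y"
proof
  assume "hyp x \<subseteq> hyp y"
  then have "hyp x = hyp y"
    using card_subset_eq[OF subspace2_finite[OF subspace2_hyp[OF y]]] card_hyp[OF x] card_hyp[OF y]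
    by simp
  then show False
    using hyp_inj[OF x y] \<open>x \<noteq> y\<close> by blast
qed

text \<open>The hyperplanes of three points on a line share the image of the line, of codimension two.\<close>

lemma hyp_inter_subset:
  assumes x: "x \<in> Vec n" "x \<noteq> vzero" and y: "y \<in> Vec n" "y \<noteq> vzero" and xy: "x \<noteq> y"
  shows "hyp x \<inter> hyp y \<subseteq> hyp (vadd x y)"
proof -
  define L where "L = {vzero, x, y, vadd x y}"
  have L: "L \<in> Verts n" "vdim L = 2"
    using subspace2_in_Verts[OF subspace2_line[OF x(1) y(1)], of 2] card_line[OF x(2) y(2) xy] two_le_n
    by (simp_all add: L_def)
  have s: "vadd x y \<in> Vec n" "vadd x y \<noteq> vzero"
    using x y xy by auto
  have in_hyp: "\<theta> L \<subseteq> hyp p" if "p \<in> Vec n" "p \<noteq> vzero" "p \<in> L" for p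
    using theta_antimono[OF pt_Verts[OF that(1,2)] L(1)] that(3) by (simp add: pt_def L_def)
  obtain a where "a \<in> hyp x" "a \<notin> hyp y"
    using hyp_not_subset[OF x y xy] by blast
  then have a: "a \<in> hyp x" "form y a = 1"
    using form_eq_0_iff[OF y(2), of a] by auto
  have "hyp x \<inter> hyp y = {w \<in> hyp x. form y w = 0}"
    using form_eq_0_iff[OF y(2)] by blast
  moreover have "card (hyp x) = 2 * card {w \<in> hyp x. form y w = 0}"
    using additive_kernel(2)[OF subspace2_hyp[OF x], where \<psi> = "form y", OF _ a] form_add_right y
      subspace2_subset_Vec[OF subspace2_hyp[OF x]] by blast
  ultimately have "card (hyp x \<inter> hyp y) = 2 ^ (n - 1)"
    using card_hyp[OF x] two_le_n by (cases n) auto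
  moreover have "card (\<theta> L) = 2 ^ (n - 1)"
    using card_theta[OF L(1)] L(2) by simp
  moreover have "finite (hyp x \<inter> hyp y)"
    using subspace2_finite[OF subspace2_hyp[OF x]] by blast
  moreover have "\<theta> L \<subseteq> hyp x \<inter> hyp y"
    using in_hyp[OF x] in_hyp[OF y] by (simp add: L_def)
  ultimately have "\<theta> L = hyp x \<inter> hyp y"
    using card_subset_eq by metis
  then show ?thesis
    using in_hyp[OF s] by (simp add: L_def)
qed

lemma form_line_zero:
  assumes x: "x \<in> Vec n" "x \<noteq> vzero" and y: "y \<in> Vec n" "y \<noteq> vzero" and "x \<noteq> y"
    and "form x w = 0" "form y w = 0"
  shows "form (vadd x y) w = 0"
proof -
  have "w \<in> hyp x \<inter> hyp y"
    using assms form_eq_0_iff by blast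
  then have "w \<in> hyp (vadd x y)"
    using hyp_inter_subset[OF x y \<open>x \<noteq> y\<close>] by blast
  then show ?thesis
    using form_eq_0_iff \<open>x \<noteq> y\<close> by simp
qed

lemma form_line_mixed:
  assumes x: "x \<in> Vec n" "x \<noteq> vzero" and y: "y \<in> Vec n" "y \<noteq> vzero" and "x \<noteq> y"
    and mixed: "form x w \<noteq> form y w"
  shows "form (vadd x y) w = 1"
proof (rule ccontr)
  have s: "vadd x y \<in> Vec n" "vadd x y \<noteq> vzero" "x \<noteq> vadd x y" "y \<noteq> vadd x y"
    using x y \<open>x \<noteq> y\<close> by auto
  assume "form (vadd x y) w \<noteq> 1"
  then have "form (vadd x y) w = 0"
    by simp
  then show False
    using mixed form_line_zero[OF x s(1,2) s(3)] form_line_zero[OF y s(1,2) s(4)]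
    by (cases "form x w = 0") auto
qed

lemma form_add_left:
  assumes x: "x \<in> Vec n" and y: "y \<in> Vec n" and z: "z \<in> Vec n"
  shows "form (vadd x y) z = form x z + form y z"
proof -
  consider "x = vzero" | "y = vzero" | "x = y" | "x \<noteq> vzero" "y \<noteq> vzero" "x \<noteq> y"
    by blast
  then show ?thesis
  proof cases
    case 4
    note mixed = form_line_mixed[OF x 4(1) y 4(2,3)]
    show ?thesis
    proof (cases "form x z = form y z")
      case False
      then show ?thesis
        using mixed[OF False] by (cases "form x z = 0") auto
    next
      case True
      show ?thesis
      proof (cases "form x z = 0")
        case True
        then show ?thesis
          using form_line_zero[OF x 4(1) y 4(2) 4(3)] \<open>form x z = form y z\<close> by simp
      next
        case False
        text \<open>Shift \<open>z\<close> into the mixed case by a vector of \<open>hyp x\<close> outside \<open>hyp y\<close>.\<close>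
        obtain a where a: "a \<in> hyp x" "a \<notin> hyp y"
          using hyp_not_subset[OF x 4(1) y 4(2,3)] by blast
        have aV: "a \<in> Vec n"
          using a(1) subspace2_subset_Vec[OF subspace2_hyp[OF x 4(1)]] by blast
        have fa: "form x a = 0" "form y a = 1"
          using a form_eq_0_iff 4 by auto
        then have "form (vadd x y) a = 1"
          using mixed by simp
        moreover have "form (vadd x y) (vadd z a) = 1"
          using mixed form_add_right[OF x z aV] form_add_right[OF y z aV] fa False True by simp
        ultimately show ?thesis
          using form_add_right[OF _ z aV, of "vadd x y"] x y False True by simp
      qed
    qed
  qed (simp_all add: form_add_right)
qed

lemma perp_pt:
  assumes "x \<in> Vec n" "x \<noteq> vzero"
  shows "perp n form (pt x) = hyp x"
  using form_eq_0_iff[OF assms(2)] subspace2_subset_Vec[OF subspace2_hyp[OF assms]]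
  by (auto simp: perp_def pt_def)

lemma perp_adjoin:
  assumes U: "subspace2 n U" and u: "u \<in> Vec n"
  shows "perp n form (adjoin U u) = {y \<in> perp n form U. form u y = 0}"
proof (intro equalityI subsetI)
  fix y assume "y \<in> perp n form (adjoin U u)"
  moreover have "u \<in> adjoin U u"
    using subspace2_vzero[OF U] by (simp add: adjoin_iff)
  ultimately show "y \<in> {y \<in> perp n form U. form u y = 0}"
    using subset_adjoin by (auto simp: perp_def)
next
  fix y assume y: "y \<in> {y \<in> perp n form U. form u y = 0}"
  then have yV: "y \<in> Vec n"
    by (simp add: perp_def)
  have "form v y = 0" if v: "v \<in> adjoin U u" for v
  proof (cases "v \<in> U")
    case True
    then show ?thesis
      using y by (simp add: perp_def)
  next
    case False
    then have uv: "vadd u v \<in> U"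
      using v by (simp add: adjoin_iff)
    then have "form (vadd u (vadd u v)) y = form u y + form (vadd u v) y"
      using form_add_left[OF u _ yV] subspace2_subset_Vec[OF U] by blast
    then show ?thesis
      using y uv by (simp add: perp_def)
  qed
  then show "y \<in> perp n form (adjoin U u)"
    using yV by (simp add: perp_def)
qed

lemma theta_adjoin:
  assumes U: "U \<in> Verts n" and u: "u \<in> Vec n" "u \<notin> U" and Uu: "adjoin U u \<in> Verts n"
  shows "\<theta> (adjoin U u) = {y \<in> \<theta> U. form u y = 0}"
proof -
  have sU: "subspace2 n U"
    using U by (rule Verts_subspace2)
  have u0: "u \<noteq> vzero"
    using u(2) subspace2_vzero[OF sU] by blast
  have "pt u \<subseteq> adjoin U u"
    using subspace2_vzero[OF sU] by (auto simp: pt_def adjoin_iff)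
  then have "\<theta> (adjoin U u) \<subseteq> hyp u"
    using theta_antimono[OF pt_Verts[OF u(1) u0] Uu] by blast
  then have sub: "\<theta> (adjoin U u) \<subseteq> {y \<in> \<theta> U. form u y = 0}"
    using theta_antimono[OF U Uu subset_adjoin] form_eq_0_iff[OF u0] by blast
  have tU: "subspace2 n (\<theta> U)"
    using theta_Verts[OF U] by (rule Verts_subspace2)
  have "\<not> \<theta> U \<subseteq> hyp u"
    using theta_subset_iff[OF pt_Verts[OF u(1) u0] U] u by (auto simp: pt_def)
  then obtain w0 where "w0 \<in> \<theta> U" "w0 \<notin> hyp u"
    by blast
  then have w0: "w0 \<in> \<theta> U" "form u w0 = 1"
    using form_eq_0_iff[OF u0, of w0] by auto
  have "form u (vadd x y) = form u x + form u y" if "x \<in> \<theta> U" "y \<in> \<theta> U" for x y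
    using form_add_right[OF u(1)] subspace2_subset_Vec[OF tU] that by blast
  note K = additive_kernel[OF tU this w0]
  have "vdim (adjoin U u) = Suc (vdim U)"
    using card_adjoin[OF sU u(2)] card_Verts[OF U] by (intro vdim_eqI) simp
  then have "card (\<theta> (adjoin U u)) = card {y \<in> \<theta> U. form u y = 0}"
    using card_theta[OF Uu] card_theta[OF U] K(2) Verts_vdim[OF Uu]
    by (simp add: Suc_diff_le)
  then show ?thesis
    using card_subset_eq[OF subspace2_finite[OF K(1)] sub] by blast
qed

lemma theta_eq_perp: "U \<in> Verts n \<Longrightarrow> \<theta> U = perp n form U"
proof (induction "vdim U" arbitrary: U)
  case 0
  then show ?case
    using Verts_vdim by fastforce
next
  case (Suc k)
  have sU: "subspace2 n U"
    using Suc.prems by (rule Verts_subspace2)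
  show ?case
  proof (cases "k = 0")
    case True
    then obtain x where "x \<in> Vec n" "x \<noteq> vzero" "U = pt x"
      using Verts_vdim_1_pt[OF Suc.prems] Suc.hyps(2) by auto
    then show ?thesis
      using perp_pt by simp
  next
    case False
    obtain U' where U': "subspace2 n U'" "U' \<subseteq> U" "card U' = 2 ^ k"
      using subspace2_exists_card[OF sU, of k] Suc.hyps(2) by auto
    have U'_Verts: "U' \<in> Verts n" "vdim U' = k"
      using subspace2_in_Verts[OF U'(1) U'(3)] False Verts_vdim[OF Suc.prems] Suc.hyps(2) by auto
    have "U' \<noteq> U"
      using U'(3) card_Verts[OF Suc.prems] Suc.hyps(2) by auto
    then obtain u where u: "u \<in> U" "u \<notin> U'"
      using U'(2) by blast
    have uV: "u \<in> Vec n"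
      using u(1) subspace2_subset_Vec[OF sU] by blast
    have "card U = 2 ^ Suc k"
      using card_Verts[OF Suc.prems] Suc.hyps(2) by simp
    then have U_eq: "adjoin U' u = U"
      using card_subset_eq[OF subspace2_finite[OF sU] adjoin_subset[OF sU U'(2) u(1)]]
        card_adjoin[OF U'(1) u(2)] U'(3) by simp
    have "\<theta> U = {y \<in> \<theta> U'. form u y = 0}"
      using theta_adjoin[OF U'_Verts(1) uV u(2)] U_eq Suc.prems by simp
    also have "\<dots> = perp n form U"
      using Suc.hyps(1)[OF U'_Verts(2)[symmetric] U'_Verts(1)] perp_adjoin[OF U'(1) uV] U_eq by simp
    finally show ?thesis .
  qed
qed

definition nondegenerate :: "vec set \<Rightarrow> bool" where
  "nondegenerate U \<longleftrightarrow> (\<forall>y\<in>U. (\<forall>u\<in>U. form u y = 0) \<longrightarrow> y = vzero)"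

lemma nondegenerateD:
  "nondegenerate U \<Longrightarrow> y \<in> U \<Longrightarrow> y \<noteq> vzero \<Longrightarrow> \<exists>u\<in>U. form u y = 1"
  unfolding nondegenerate_def by (metis bit_not_zero_iff)

lemma nondegenerate_Vec: "nondegenerate (Vec n)"
  unfolding nondegenerate_def
proof (intro ballI impI)
  fix y assume y: "y \<in> Vec n" and rad: "\<forall>u\<in>Vec n. form u y = 0"
  show "y = vzero"
  proof (rule ccontr)
    assume "y \<noteq> vzero"
    then obtain i where yi: "y i = 1"
      by (auto simp: vzero_def fun_eq_iff)
    text \<open>The coordinate hyperplane \<open>E\<close> misses \<open>y\<close> and is the image of a point.\<close>
    define E where "E = {v \<in> Vec n. v i = 0}"
    have E: "subspace2 n E" "card (Vec n) = 2 * card E"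
      using additive_kernel[OF subspace2_Vec, where \<psi> = "\<lambda>v. v i", OF _ y yi]
      unfolding E_def by (simp_all add: vadd_def)
    then have E_Verts: "E \<in> Verts n" "vdim E = n"
      using subspace2_in_Verts[OF E(1), of n] two_le_n by auto
    obtain P where P: "P \<in> Verts n" "\<theta> P = E"
      using theta_surj[OF E_Verts(1)] by blast
    have "n = Suc n - vdim P"
      using vdim_theta[OF P(1)] P(2) E_Verts(2) by simp
    then have "vdim P = 1"
      using Verts_vdim[OF P(1)] by arith
    then obtain x where x: "x \<in> Vec n" "x \<noteq> vzero" "P = pt x"
      using Verts_vdim_1_pt[OF P(1)] by blast
    have "y \<notin> hyp x"
      using P(2) x(3) yi by (simp add: E_def)
    then show False
      using rad x form_eq_0_iff by blast
  qed
qed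

lemma form_vadd_self:
  "x \<in> Vec n \<Longrightarrow> y \<in> Vec n \<Longrightarrow>
    form (vadd x y) (vadd x y) = form x x + form x y + (form y x + form y y)"
  by (simp add: form_add_left form_add_right)

subsection \<open>Alternating forms: symplectic polarities\<close>

context
  assumes alternating: "\<forall>x\<in>Vec n. form x x = 0"
begin

lemma form_commute: "x \<in> Vec n \<Longrightarrow> y \<in> Vec n \<Longrightarrow> form x y = form y x"
  using form_vadd_self[of x y] alternating by simp

lemma hyperbolic_shift:
  assumes u: "u \<in> Vec n" and y: "y \<in> Vec n" and v: "v \<in> Vec n" and uy: "form u y = 1"
  obtains p where "p \<in> {vzero, u, y, vadd u y}" "form u (vadd p v) = 0" "form y (vadd p v) = 0"
proof -
  have f: "form u u = 0" "form y y = 0" "form y u = 1"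
    using alternating u y form_commute[OF u y] uy by auto
  show ?thesis
  proof (cases "form u v = 0"; cases "form y v = 0")
    assume "form u v = 0" "form y v = 0"
    then show ?thesis
      using that[of vzero] by simp
  next
    assume "form u v = 0" "form y v \<noteq> 0"
    then show ?thesis
      using that[of u] f form_add_right[OF u u v] form_add_right[OF y u v] by simp
  next
    assume "form u v \<noteq> 0" "form y v = 0"
    then show ?thesis
      using that[of y] f uy form_add_right[OF u y v] form_add_right[OF y y v] by simp
  next
    assume "form u v \<noteq> 0" "form y v \<noteq> 0"
    then show ?thesis
      using that[of "vadd u y"] f uy u y v by (simp add: form_add_right vadd_assoc)
  qed
qed

lemma hyperbolic_complement:
  assumes W: "subspace2 n W" and uy: "u \<in> W" "y \<in> W" "form u y = 1"
  shows "subspace2 n {w \<in> W. form u w = 0 \<and> form y w = 0}"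
    and "card W = 4 * card {w \<in> W. form u w = 0 \<and> form y w = 0}"
proof -
  have WV: "W \<subseteq> Vec n"
    using W by (rule subspace2_subset_Vec)
  then have uyV: "u \<in> Vec n" "y \<in> Vec n"
    using uy by auto
  have add: "form a (vadd x x') = form a x + form a x'" if "a \<in> Vec n" "x \<in> W" "x' \<in> W" for a x x'
    using form_add_right that WV by blast
  define H where "H = {w \<in> W. form u w = 0}"
  have H: "subspace2 n H" "card W = 2 * card H"
    using additive_kernel[OF W, where \<psi> = "form u", OF add[OF uyV(1)] uy(2,3)] by (simp_all add: H_def)
  have "u \<in> H" "form y u = 1"
    using alternating uy uyV form_commute by (auto simp: H_def)
  moreover have "{w \<in> W. form u w = 0 \<and> form y w = 0} = {w \<in> H. form y w = 0}"
    by (auto simp: H_def)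
  moreover have "form y (vadd x x') = form y x + form y x'" if "x \<in> H" "x' \<in> H" for x x'
    using add[OF uyV(2)] that by (simp add: H_def)
  ultimately show "subspace2 n {w \<in> W. form u w = 0 \<and> form y w = 0}"
    and "card W = 4 * card {w \<in> W. form u w = 0 \<and> form y w = 0}"
    using additive_kernel[OF H(1), where \<psi> = "form y"] H(2) by simp_all
qed

lemma nondegenerate_hyperbolic_complement:
  assumes W: "subspace2 n W" "nondegenerate W" and uy: "u \<in> W" "y \<in> W" "form u y = 1"
  shows "nondegenerate {w \<in> W. form u w = 0 \<and> form y w = 0}" (is "nondegenerate ?W'")
  unfolding nondegenerate_def
proof (intro ballI impI)
  have WV: "W \<subseteq> Vec n"
    using W(1) by (rule subspace2_subset_Vec)
  then have uyV: "u \<in> Vec n" "y \<in> Vec n"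
    using uy by auto
  fix w assume w: "w \<in> ?W'" and rad: "\<forall>v\<in>?W'. form v w = 0"
  show "w = vzero"
  proof (rule ccontr)
    assume "w \<noteq> vzero"
    then obtain v where v: "v \<in> W" "form v w = 1"
      using nondegenerateD[OF W(2)] w by auto
    obtain p where p: "p \<in> {vzero, u, y, vadd u y}" "form u (vadd p v) = 0" "form y (vadd p v) = 0"
      using hyperbolic_shift[OF uyV] v(1) WV uy(3) by blast
    have pW: "p \<in> W"
      using p(1) uy subspace2_vzero[OF W(1)] subspace2_vadd[OF W(1)] by auto
    have wV: "w \<in> Vec n"
      using w WV by auto
    have "form p w = 0"
      using p(1) w form_add_left[OF uyV wV] by auto
    moreover have "vadd p v \<in> ?W'"
      using p(2,3) subspace2_vadd[OF W(1) pW v(1)] by simp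
    ultimately show False
      using rad form_add_left[of p v w] pW v WV wV by auto
  qed
qed

lemma card_nondegenerate: "subspace2 n W \<Longrightarrow> nondegenerate W \<Longrightarrow> \<exists>m. card W = 4 ^ m"
proof (induction "card W" arbitrary: W rule: less_induct)
  case less
  show ?case
  proof (cases "W = {vzero}")
    case True
    then show ?thesis
      by (intro exI[of _ 0]) simp
  next
    case False
    then obtain y where y: "y \<in> W" "y \<noteq> vzero"
      using subspace2_vzero[OF less.prems(1)] by blast
    then obtain u where u: "u \<in> W" "form u y = 1"
      using nondegenerateD[OF less.prems(2)] by blast
    note hc = hyperbolic_complement[OF less.prems(1) u(1) y(1) u(2)]
      nondegenerate_hyperbolic_complement[OF less.prems u(1) y(1) u(2)]
    have "0 < card {w \<in> W. form u w = 0 \<and> form y w = 0}"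
      using subspace2_finite[OF hc(1)] subspace2_vzero[OF hc(1)] card_gt_0_iff by blast
    then have "card {w \<in> W. form u w = 0 \<and> form y w = 0} < card W"
      using hc(2) by linarith
    then obtain m where "card {w \<in> W. form u w = 0 \<and> form y w = 0} = 4 ^ m"
      using less.hyps hc(1,3) by blast
    then show ?thesis
      using hc(2) by (intro exI[of _ "Suc m"]) simp
  qed
qed

lemma symplectic_and_odd: "symplectic_polarity n \<theta> \<and> odd n"
proof
  have "\<forall>x\<in>Vec n. (\<forall>y\<in>Vec n. form x y = 0) \<longrightarrow> x = vzero"
    using nondegenerate_Vec form_commute by (simp add: nondegenerate_def)
  then have "alt_form n form"
    using form_add_left form_add_right alternating by (simp add: alt_form_def)
  then show "symplectic_polarity n \<theta>"
    unfolding symplectic_polarity_def using theta_eq_perp by blast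
  obtain m where "card (Vec n) = 4 ^ m"
    using card_nondegenerate[OF subspace2_Vec nondegenerate_Vec] by blast
  then have "(2::nat) ^ Suc n = 4 ^ m"
    by (simp only: card_Vec)
  also have "\<dots> = 2 ^ (2 * m)"
    by (simp add: power_mult)
  finally have "Suc n = 2 * m"
    by (subst (asm) power_inject_exp) simp_all
  then show "odd n"
    by presburger
qed

end

subsection \<open>Anisotropic forms: exceptional domestic dualities\<close>

lemma nondegenerate_pt: "form x x = 1 \<Longrightarrow> nondegenerate (pt x)"
  by (auto simp: nondegenerate_def pt_def)

lemma nondegenerate_kernel:
  assumes U: "subspace2 n U" "nondegenerate U" and x: "x \<in> U" "form x x = 1"
  defines "H \<equiv> {y \<in> U. form x y = 0}"
  shows "subspace2 n H" "card U = 2 * card H" "nondegenerate H"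
proof -
  have UV: "U \<subseteq> Vec n"
    using U(1) by (rule subspace2_subset_Vec)
  then have xV: "x \<in> Vec n"
    using x by blast
  have "form x (vadd a b) = form x a + form x b" if "a \<in> U" "b \<in> U" for a b
    using form_add_right[OF xV] that UV by blast
  from additive_kernel[OF U(1) this x]
  show H: "subspace2 n H" "card U = 2 * card H"
    by (simp_all add: H_def)
  show "nondegenerate H"
    unfolding nondegenerate_def
  proof (intro ballI impI)
    fix y assume y: "y \<in> H" and rad: "\<forall>h\<in>H. form h y = 0"
    have yV: "y \<in> Vec n"
      using y UV by (auto simp: H_def)
    have "form u y = 0" if u: "u \<in> U" for u
    proof (cases "form x u = 0")
      case True
      then show ?thesis
        using rad u by (simp add: H_def)
    next
      case False
      have uV: "u \<in> Vec n"
        using u UV by blast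
      have "vadd u x \<in> H"
        using False x form_add_right[OF xV uV xV] subspace2_vadd[OF U(1) u x(1)] by (simp add: H_def)
      then show ?thesis
        using rad y form_add_left[OF uV xV yV] by (simp add: H_def)
    qed
    then show "y = vzero"
      using U(2) y by (simp add: nondegenerate_def H_def)
  qed
qed

lemma form_one_on_null_kernel:
  assumes H: "subspace2 n H" "nondegenerate H" and x: "x \<in> Vec n" and h0: "h0 \<in> H" "form h0 x = 1"
    and null: "\<And>y h. y \<in> H \<Longrightarrow> h \<in> H \<Longrightarrow> form y x = 0 \<Longrightarrow> form h x = 0 \<Longrightarrow> form y h = 0"
    and k: "k \<in> H" "form k x = 0" "k \<noteq> vzero"
  shows "form h0 k = 1"
proof -
  have HV: "H \<subseteq> Vec n"
    using H(1) by (rule subspace2_subset_Vec)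
  obtain h' where h': "h' \<in> H" "form h' k = 1"
    using nondegenerateD[OF H(2) k(1,3)] by blast
  have "form h' x = 1"
    using null[OF h'(1) k(1) _ k(2)] h'(2) by (cases "form h' x = 0") auto
  then have "form (vadd h' h0) x = 0"
    using h0 h'(1) form_add_left[OF _ _ x, of h' h0] HV by auto
  then have "form (vadd h' h0) k = 0"
    using null[OF _ k(1) _ k(2)] subspace2_vadd[OF H(1) h'(1) h0(1)] by blast
  then show ?thesis
    using form_add_left[of h' h0 k] h' h0 k HV by auto
qed

lemma exists_form_one_in_kernel:
  assumes H: "subspace2 n H" "nondegenerate H" "8 \<le> card H" and x: "x \<in> Vec n"
  shows "\<exists>y\<in>H. \<exists>h\<in>H. form y x = 0 \<and> form h x = 0 \<and> form y h = 1"
proof (cases "\<forall>h\<in>H. form h x = 0")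
  case True
  obtain h where "h \<in> H" "h \<noteq> vzero"
    using two_elements_except[OF subspace2_finite[OF H(1)], of vzero] H(3) by auto
  then obtain y where "y \<in> H" "form y h = 1"
    using nondegenerateD[OF H(2)] by blast
  then show ?thesis
    using True \<open>h \<in> H\<close> by blast
next
  case False
  then obtain h0 where h0: "h0 \<in> H" "form h0 x = 1"
    by auto
  have HV: "H \<subseteq> Vec n"
    using H(1) by (rule subspace2_subset_Vec)
  define K where "K = {h \<in> H. form h x = 0}"
  have "form (vadd a b) x = form a x + form b x" if "a \<in> H" "b \<in> H" for a b
    using form_add_left[OF _ _ x] that HV by blast
  note K = additive_kernel[OF H(1), where \<psi> = "\<lambda>h. form h x", OF this h0, folded K_def]
  have "3 \<le> card K"
    using K(2) H(3) by simp
  then obtain k1 k2 where k: "k1 \<in> K" "k2 \<in> K" "k1 \<noteq> vzero" "k2 \<noteq> vzero" "k1 \<noteq> k2"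
    using two_elements_except[OF subspace2_finite[OF K(1)]] by metis
  have k3: "vadd k1 k2 \<in> K" "vadd k1 k2 \<noteq> vzero"
    using subspace2_vadd[OF K(1) k(1,2)] k(5) by auto
  text \<open>A totally null kernel would pair each of \<open>k1\<close>, \<open>k2\<close>, \<open>vadd k1 k2\<close> with \<open>h0\<close> to \<open>1\<close>.\<close>
  show ?thesis
  proof (rule ccontr)
    assume none: "\<not> ?thesis"
    have null: "form y h = 0" if "y \<in> H" "h \<in> H" "form y x = 0" "form h x = 0" for y h
    proof (rule ccontr)
      assume "form y h \<noteq> 0"
      then have "form y h = 1"
        by simp
      then show False
        using none that by blast
    qed
    have one: "form h0 k = 1" if "k \<in> H" "form k x = 0" "k \<noteq> vzero" for k
      by (rule form_one_on_null_kernel[OF H(1,2) x h0 _ that]) (fact null)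
    have kH: "k1 \<in> H" "form k1 x = 0" "k2 \<in> H" "form k2 x = 0" "vadd k1 k2 \<in> H" "form (vadd k1 k2) x = 0"
      using k(1,2) k3(1) by (simp_all add: K_def)
    have "form h0 (vadd k1 k2) = form h0 k1 + form h0 k2"
      using form_add_right[of h0 k1 k2] h0(1) kH(1,3) HV by blast
    then show False
      using one[OF kH(1,2) k(3)] one[OF kH(3,4) k(4)] one[OF kH(5,6) k3(2)] by simp
  qed
qed

text \<open>Keeps the descent through the hyperplanes \<open>x'\<^sup>\<bottom>\<close> going: the next one again contains
  an anisotropic vector.\<close>

lemma anisotropic_descent:
  assumes U: "subspace2 n U" "nondegenerate U" "16 \<le> card U" and x: "x \<in> U" "form x x = 1"
  shows "\<exists>x'\<in>U. form x' x' = 1 \<and> (\<exists>z\<in>U. form x' z = 0 \<and> form z z = 1)"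
proof (cases "\<exists>z\<in>U. form x z = 0 \<and> form z z = 1")
  case True
  then show ?thesis
    using x by blast
next
  case False
  have UV: "U \<subseteq> Vec n"
    using U(1) by (rule subspace2_subset_Vec)
  note H = nondegenerate_kernel[OF U(1,2) x]
  have "8 \<le> card {y \<in> U. form x y = 0}"
    using H(2) U(3) by simp
  then obtain y h where y: "y \<in> U" "form x y = 0" and h: "h \<in> U" "form x h = 0"
    and yh: "form y x = 0" "form h x = 0" "form y h = 1"
    using exists_form_one_in_kernel[OF H(1,3)] x(1) UV by blast
  have iso: "form y y = 0" "form h h = 0"
    using False y h by auto
  have V: "x \<in> Vec n" "y \<in> Vec n" "h \<in> Vec n"
    using x(1) y(1) h(1) UV by auto
  have "form (vadd x y) (vadd x y) = 1" "form (vadd x h) (vadd x h) = 1"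
    using form_vadd_self V x(2) y(2) h(2) yh iso by simp_all
  moreover have "form (vadd x y) (vadd x h) = 0"
    using form_add_left form_add_right V x(2) h(2) yh by simp
  ultimately show ?thesis
    using subspace2_vadd[OF U(1) x(1) y(1)] subspace2_vadd[OF U(1) x(1) h(1)] by blast
qed

lemma exists_nondegenerate_subspace:
  assumes "subspace2 n U" "nondegenerate U" "card U = 2 ^ j" "x \<in> U" "form x x = 1"
    and "1 \<le> k" "k \<le> j"
  shows "\<exists>W. subspace2 n W \<and> card W = 2 ^ k \<and> nondegenerate W"
  using assms
proof (induction j arbitrary: U x)
  case 0
  then show ?case
    by simp
next
  case (Suc j)
  have xV: "x \<in> Vec n"
    using Suc.prems(1,4) subspace2_subset_Vec by blast
  have "k = Suc j \<or> k = 1 \<or> k = j \<or> 2 \<le> k \<and> k < j"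
    using Suc.prems(6,7) by linarith
  then consider "k = Suc j" | "k = 1" | "k = j" | "2 \<le> k" "k < j"
    by blast
  then show ?case
  proof cases
    case 1
    then show ?thesis
      using Suc.prems by blast
  next
    case 2
    have "x \<noteq> vzero"
      using Suc.prems(5) by auto
    then show ?thesis
      using 2 subspace2_pt[OF xV] card_pt nondegenerate_pt[OF Suc.prems(5)] by auto
  next
    case 3
    then show ?thesis
      using nondegenerate_kernel[OF Suc.prems(1,2,4,5)] Suc.prems(3) by auto
  next
    case 4
    have "(2::nat) ^ 4 \<le> 2 ^ Suc j"
      using 4 by (intro power_increasing) auto
    then obtain x' z where x': "x' \<in> U" "form x' x' = 1" and z: "z \<in> U" "form x' z = 0" "form z z = 1"
      using anisotropic_descent[OF Suc.prems(1,2) _ Suc.prems(4,5)] Suc.prems(3) by auto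
    note H = nondegenerate_kernel[OF Suc.prems(1,2) x']
    have "card {y \<in> U. form x' y = 0} = 2 ^ j"
      using H(2) Suc.prems(3) by simp
    then show ?thesis
      using Suc.IH[OF H(1) H(3) _ _ z(3)] z 4 Suc.prems(6) by auto
  qed
qed

lemma exceptional_if_anisotropic:
  assumes x: "x \<in> Vec n" "form x x = 1" and dom: "domestic n \<theta>"
  shows "exceptional_domestic n \<theta>"
  unfolding exceptional_domestic_def
proof (intro conjI dom ballI)
  fix i assume i: "i \<in> {1..n}"
  obtain U where U: "subspace2 n U" "card U = 2 ^ i" "nondegenerate U"
    using exists_nondegenerate_subspace[OF subspace2_Vec nondegenerate_Vec card_Vec x, of i] i by auto
  have U_Verts: "U \<in> Verts n" "vdim U = i"
    using subspace2_in_Verts[OF U(1,2)] i by auto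
  have "U \<inter> \<theta> U = {vzero}"
    using theta_eq_perp[OF U_Verts(1)] U(3) subspace2_vzero[OF U(1)] subspace2_subset_Vec[OF U(1)]
    by (auto simp: perp_def nondegenerate_def)
  moreover have "vdim U + vdim (\<theta> U) = Suc n"
    using vdim_theta[OF U_Verts(1)] U_Verts(2) i by simp
  ultimately have "opp_simplex n {U} {\<theta> U}"
    using opp_simplex_complementary[OF U_Verts(1) theta_Verts[OF U_Verts(1)]] by blast
  then show "\<exists>S. simplex n S \<and> i \<in> stype S \<and> opp_simplex n S (\<theta> ` S)"
    using U_Verts by (intro exI[of _ "{U}"]) (auto simp: simplex_def incident_def stype_def)
qed

end

theorem theorem3p10:
  fixes n :: nat and \<theta> :: "(nat \<Rightarrow> bit) set \<Rightarrow> (nat \<Rightarrow> bit) set"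
  assumes "n \<ge> 2" and "duality n \<theta>" and "domestic n \<theta>"
  shows "exceptional_domestic n \<theta> \<or> (odd n \<and> symplectic_polarity n \<theta>)"
proof -
  interpret PG_duality n \<theta>
    using assms(1,2) by unfold_locales
  show ?thesis
  proof (cases "\<exists>x\<in>Vec n. form x x = 1")
    case True
    then show ?thesis
      using exceptional_if_anisotropic assms(3) by blast
  next
    case False
    then have "\<forall>x\<in>Vec n. form x x = 0"
      by simp
    then show ?thesis
      using symplectic_and_odd by blast
  qed
qed

end
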